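(* Let $r:[0,\infty)\to(0,\infty)$ be a hazard-rate-type function such that, for each $n\ge1$, the function $(n+1)r(t)$ is the hazard rate of an absolutely continuous non-negative random variable $X_n$ with $P(X_n>t)>0$ for all $t\ge0$; let the $X_n$ be independent. Let $\{T^Y_n;n\ge1\}$ be the arrival times of the generalized Yule birth process based on $\{X_n\}$, and $\{T'_n;n\ge1\}$ the failure times of the replacement-by-a-new-unit process based on $\{X_n\}$. If $r$ is increasing, then $(T'_1,\ldots,T'_n)\ge_{\mathrm{dyn\text{-}hr}}(T^Y_1,\ldots,T^Y_n)$ for all $n\ge1$; if $r$ is decreasing, then $(T'_1,\ldots,T'_n)\le_{\mathrm{dyn\text{-}hr}}(T^Y_1,\ldots,T^Y_n)$ for all $n\ge1$.
   Context: Generalized Yule birth process: the relevation (elementary pure birth) process based on the distributions $F_n$ of $X_n$, i.e. $T^Y_1\sim F_1$ and, for $i\ge2$, conditionally on $T^Y_1=t_1,\ldots,T^Y_{i-1}=t_{i-1}$ ($0<t_1<\cdots<t_{i-1}$), $P(T^Y_i>t\mid\cdot)=\overline F_i(t)/\overline F_i(t_{i-1})$ for $t\ge t_{i-1}$. Replacement-by-a-new-unit process: $T'_n=X_1+\cdots+X_n$. Multivariate dynamic hazard rate order: for a non-negative continuous random vector $\mathbf X$, a history at time $t$ is $h_t=\{\mathbf X_I=\mathbf x_I,\mathbf X_{\overline I}>t\mathbf e\}$ ($0<x_i<t$), and $\eta_j(t\mid h_t)=\lim_{\Delta\to0^+}\Delta^{-1}P(t<X_j\le t+\Delta\mid h_t)$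 for $j\in\overline I$. $\mathbf X\le_{\mathrm{dyn\text{-}hr}}\mathbf Y$ (with functions $\eta$, $\lambda$) means $\eta_k(t\mid h_t)\ge\lambda_k(t\mid h'_t)$ for all $t\ge0$, all $h_t=\{\mathbf X_{I\cup J}=\mathbf x_{I\cup J},\mathbf X_{\overline{I\cup J}}>t\mathbf e\}$, $h'_t=\{\mathbf Y_I=\mathbf y_I,\mathbf Y_{\overline I}>t\mathbf e\}$ with $I\cap J=\emptyset$, $\mathbf 0\le\mathbf x_I\le\mathbf y_I\le t\mathbf e$, $\mathbf 0\le\mathbf x_J\le t\mathbf e$, and all $k\in\overline{I\cup J}$. *)

theory Defs
  imports "HOL-Probability.Probability"
begin

definition surv :: "(real \<Rightarrow> real) \<Rightarrow> real \<Rightarrow> real" where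
  "surv f t = integral {t<..} f"

definition nonneg_ac_density :: "(real \<Rightarrow> real) \<Rightarrow> bool" where
  "nonneg_ac_density f \<longleftrightarrow> (\<forall>s. 0 \<le> f s) \<and> (\<forall>s<0. f s = 0) \<and> (f has_integral 1) UNIV"

definition is_hazard_rate :: "(real \<Rightarrow> real) \<Rightarrow> (real \<Rightarrow> real) \<Rightarrow> bool" where
  "is_hazard_rate f h \<longleftrightarrow>
     (\<forall>t\<ge>0. ((\<lambda>D. (surv f t - surv f (t + D)) / (D * surv f t)) \<longlongrightarrow> h t) (at_right 0))"

text \<open>Convention t_0 = 0.\<close>
definition prevt :: "(nat \<Rightarrow> real) \<Rightarrow> nat \<Rightarrow> real" where
  "prevt t i = (if i = 1 then 0 else t (i - 1))"

text \<open>Generalized Yule (relevation) process: T_1 ~ F_1 and, given T_1..T_{i-1},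
  T_i has density f_i(s) / Fbar_i(t_{i-1}) on s > t_{i-1}.\<close>
definition yule_dens :: "(nat \<Rightarrow> real \<Rightarrow> real) \<Rightarrow> nat \<Rightarrow> (nat \<Rightarrow> real) \<Rightarrow> real" where
  "yule_dens f n t =
     (if \<forall>i\<in>{1..n}. prevt t i < t i
      then (\<Prod>i=1..n. f i (t i) / surv (f i) (prevt t i)) else 0)"

text \<open>Replacement-by-a-new-unit process T'_n = X_1 + ... + X_n with X_i independent:
  the joint density is that of (X_1,...,X_n) at the increments (unit Jacobian).\<close>
definition repl_dens :: "(nat \<Rightarrow> real \<Rightarrow> real) \<Rightarrow> nat \<Rightarrow> (nat \<Rightarrow> real) \<Rightarrow> real" where
  "repl_dens f n t = (\<Prod>i=1..n. f i (t i - prevt t i))"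

text \<open>Unnormalised conditional probability (given X_O = x_O) that all unobserved
  components exceed t, and possibly additionally X_j <= t + D.\<close>
definition hist_mass :: "((nat \<Rightarrow> real) \<Rightarrow> real) \<Rightarrow> nat \<Rightarrow> nat set \<Rightarrow> (nat \<Rightarrow> real)
    \<Rightarrow> real \<Rightarrow> (nat \<Rightarrow> real \<Rightarrow> bool) \<Rightarrow> ennreal" where
  "hist_mass g n Obs x t P =
     (\<integral>\<^sup>+ y. ennreal (g (merge Obs ({1..n} - Obs) (x, y)))
            * indicator {y. (\<forall>i\<in>{1..n} - Obs. t < y i) \<and> (\<forall>i\<in>{1..n} - Obs. P i (y i))} y
        \<partial>(PiM ({1..n} - Obs) (\<lambda>_. lborel)))"

definition possible_hist :: "((nat \<Rightarrow> real) \<Rightarrow> real) \<Rightarrow> nat \<Rightarrow> nat set \<Rightarrow> (nat \<Rightarrow> real)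
    \<Rightarrow> real \<Rightarrow> bool" where
  "possible_hist g n Obs x t \<longleftrightarrow>
     0 < hist_mass g n Obs x t (\<lambda>_ _. True) \<and> hist_mass g n Obs x t (\<lambda>_ _. True) < \<infinity>"

definition cond_hazard :: "((nat \<Rightarrow> real) \<Rightarrow> real) \<Rightarrow> nat \<Rightarrow> nat set \<Rightarrow> (nat \<Rightarrow> real)
    \<Rightarrow> real \<Rightarrow> nat \<Rightarrow> real" where
  "cond_hazard g n Obs x t j =
     Lim (at_right 0) (\<lambda>D.
        enn2real (hist_mass g n Obs x t (\<lambda>i s. i = j \<longrightarrow> s \<le> t + D))
        / (D * enn2real (hist_mass g n Obs x t (\<lambda>_ _. True))))"

text \<open>The comparison is required for all histories at which both conditional hazards
  are defined (i.e. both histories have positive likelihood).\<close>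
definition dyn_hr_le :: "nat \<Rightarrow> ((nat \<Rightarrow> real) \<Rightarrow> real) \<Rightarrow> ((nat \<Rightarrow> real) \<Rightarrow> real) \<Rightarrow> bool" where
  "dyn_hr_le n gX gY \<longleftrightarrow>
     (\<forall>t\<ge>0. \<forall>I J. I \<subseteq> {1..n} \<longrightarrow> J \<subseteq> {1..n} \<longrightarrow> I \<inter> J = {} \<longrightarrow>
       (\<forall>x y. (\<forall>i\<in>I. 0 \<le> x i \<and> x i \<le> y i \<and> y i \<le> t) \<longrightarrow>
              (\<forall>j\<in>J. 0 \<le> x j \<and> x j \<le> t) \<longrightarrow>
              possible_hist gX n (I \<union> J) x t \<longrightarrow> possible_hist gY n I y t \<longrightarrow>
              (\<forall>k\<in>{1..n} - (I \<union> J).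
                 cond_hazard gX n (I \<union> J) x t k \<ge> cond_hazard gY n I y t k)))"

end

theory Submission
  imports Defs
begin

text \<open>
  Both joint densities are Markov, \<open>g(t\<^sub>1, ..., t\<^sub>n) = \<Prod>\<^sub>i Q\<^sub>i(t\<^sub>i\<^sub>-\<^sub>1, t\<^sub>i)\<close>, where the kernel
  \<open>Q\<^sub>i(b, -)\<close> is the density of \<open>X\<^sub>i\<close> conditioned on \<open>X\<^sub>i > b\<close> (Yule) or of \<open>b + X\<^sub>i\<close>
  (replacement); in both cases it puts no mass below \<open>b\<close>. Hence a history of positive
  likelihood whose observed times lie before \<open>t\<close> observes exactly \<open>T\<^sub>1, ..., T\<^sub>m\<close>. Integrating
  out the unobserved times from the last one down, a kernel started beyond \<open>t\<close> has all its
  mass beyond \<open>t\<close>, so only \<open>T\<^sub>m\<^sub>+\<^sub>1\<close> has a positive hazard at \<open>t\<close>, namely that of its kernel: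
  \<open>(m + 2) r(t)\<close> for the Yule process and \<open>(m + 2) r(t - t\<^sub>m)\<close> for the replacement process.
  Comparing \<open>r(t)\<close> with \<open>r(t - t\<^sub>m)\<close> for monotone \<open>r\<close> gives both orderings.
\<close>

section \<open>Survival functions\<close>

lemma nonneg_ac_density_integrable_on:
  assumes "nonneg_ac_density f" "A \<in> sets lebesgue"
  shows "f integrable_on A"
proof -
  have "f absolutely_integrable_on UNIV"
    using assms(1) unfolding nonneg_ac_density_def
    by (intro nonnegative_absolutely_integrable_1) auto
  then have "set_integrable lebesgue A f"
    using assms(2) by (rule set_integrable_subset) auto
  then show ?thesis by (rule set_lebesgue_integral_eq_integral(1))
qed

lemma surv_has_integral:
  assumes "nonneg_ac_density f"
  shows "(f has_integral surv f c) {c<..}"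
  unfolding surv_def using nonneg_ac_density_integrable_on[OF assms] by auto


lemma surv_diff_has_integral:
  assumes "nonneg_ac_density f" "c \<le> d"
  shows "(f has_integral (surv f c - surv f d)) {c<..d}"
proof -
  have part: "(f has_integral integral {c<..d} f) {c<..d}"
    using nonneg_ac_density_integrable_on[OF assms(1)] by auto
  have "(f has_integral (integral {c<..d} f + surv f d)) ({c<..d} \<union> {d<..})"
    by (rule has_integral_Un[OF part surv_has_integral[OF assms(1)]])
      (auto intro: negligible_subset[OF negligible_empty])
  moreover have "{c<..d} \<union> {d<..} = {c<..}" using assms(2) by auto
  ultimately have "(f has_integral (integral {c<..d} f + surv f d)) {c<..}" by simp
  then have "surv f c = integral {c<..d} f + surv f d"
    using surv_has_integral[OF assms(1)] has_integral_unique by blast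
  then show ?thesis using part by simp
qed

lemma surv_complement_has_integral:
  assumes "nonneg_ac_density f"
  shows "(f has_integral (1 - surv f c)) {..c}"
proof -
  have part: "(f has_integral integral {..c} f) {..c}"
    using nonneg_ac_density_integrable_on[OF assms(1)] by auto
  have "(f has_integral (integral {..c} f + surv f c)) ({..c} \<union> {c<..})"
    by (rule has_integral_Un[OF part surv_has_integral[OF assms(1)]])
      (auto intro: negligible_subset[OF negligible_empty])
  moreover have "{..c} \<union> {c<..} = (UNIV::real set)" by auto
  ultimately have "(f has_integral (integral {..c} f + surv f c)) UNIV" by simp
  then have "1 = integral {..c} f + surv f c"
    using assms has_integral_unique unfolding nonneg_ac_density_def by blast
  then have "integral {..c} f = 1 - surv f c" by simp
  then show ?thesis using part by simp
qed

lemma surv_nonneg: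
  assumes "nonneg_ac_density f"
  shows "0 \<le> surv f c"
  using has_integral_nonneg[OF surv_has_integral[OF assms]] assms
  by (simp add: nonneg_ac_density_def)

lemma surv_antimono:
  assumes "nonneg_ac_density f" "c \<le> d"
  shows "surv f d \<le> surv f c"
  using has_integral_nonneg[OF surv_diff_has_integral[OF assms]] assms(1)
  by (simp add: nonneg_ac_density_def)

lemma surv_le_1:
  assumes "nonneg_ac_density f"
  shows "surv f c \<le> 1"
  using has_integral_nonneg[OF surv_complement_has_integral[OF assms]] assms
  by (simp add: nonneg_ac_density_def)

lemma surv_eq_1:
  assumes "nonneg_ac_density f" "c \<le> 0"
  shows "surv f c = 1"
proof -
  have "((\<lambda>_. 0) has_integral 0) {..c}" by simp
  then have "(f has_integral 0) {..c}"
    using has_integral_spike[where S="{0}" and T="{..c}" and f="\<lambda>_. 0" and g=f] assms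
    by (auto simp: nonneg_ac_density_def)
  then have "1 - surv f c = 0"
    using surv_complement_has_integral[OF assms(1)] has_integral_unique by blast
  then show ?thesis by simp
qed

lemma borel_measurable_surv:
  assumes "nonneg_ac_density f"
  shows "surv f \<in> borel_measurable borel"
proof -
  have "mono (\<lambda>c. - surv f c)"
    using surv_antimono[OF assms] by (auto intro: monoI)
  then have "(\<lambda>c. - (- surv f c)) \<in> borel_measurable borel"
    by (intro borel_measurable_uminus borel_measurable_mono)
  then show ?thesis by simp
qed

lemma surv_tendsto_at_right:
  assumes "is_hazard_rate f h" "0 < surv f t" "0 \<le> t"
  shows "((\<lambda>D. surv f (t + D)) \<longlongrightarrow> surv f t) (at_right 0)"
proof -
  let ?q = "\<lambda>D. (surv f t - surv f (t + D)) / (D * surv f t)"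
  have "(?q \<longlongrightarrow> h t) (at_right 0)"
    using assms(1,3) unfolding is_hazard_rate_def by auto
  then have "((\<lambda>D. surv f t - ?q D * (D * surv f t)) \<longlongrightarrow> surv f t - h t * (0 * surv f t)) (at_right 0)"
    by (intro tendsto_intros tendsto_ident_at)
  moreover have "\<forall>\<^sub>F D in at_right 0. surv f t - ?q D * (D * surv f t) = surv f (t + D)"
    using eventually_at_right_less[of "0::real"] by eventually_elim (use assms(2) in simp)
  ultimately show ?thesis by (simp add: tendsto_cong)
qed

lemma nonneg_ac_density_borel_version:
  assumes "nonneg_ac_density f"
  obtains g where "g \<in> borel_measurable borel" "AE x in lborel. f x = g x"
proof -
  have "f \<in> borel_measurable lebesgue"
    using assms has_integral_implies_lebesgue_measurable_real[of f 1 UNIV]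
    unfolding nonneg_ac_density_def by simp
  from completion_ex_borel_measurable_real[OF this] that show ?thesis by auto
qed

lemma nn_integral_version_eq_integral:
  assumes "nonneg_ac_density f" "AE x in lborel. f x = g x" "(f has_integral v) A"
  shows "(\<integral>\<^sup>+ s. ennreal (g s) * indicator A s \<partial>lborel) = ennreal v"
proof -
  have "(\<integral>\<^sup>+ s. ennreal (g s) * indicator A s \<partial>lborel) = (\<integral>\<^sup>+ s. ennreal (f s) * indicator A s \<partial>lborel)"
    using assms(2) by (intro nn_integral_cong_AE) auto
  also have "\<dots> = ennreal v"
    using assms(1,3) by (intro nn_integral_has_integral_lebesgue') (auto simp: nonneg_ac_density_def)
  finally show ?thesis .
qed

lemma nn_integral_version_greaterThan:
  assumes "nonneg_ac_density f" "AE x in lborel. f x = g x"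
  shows "(\<integral>\<^sup>+ s. ennreal (g s) * indicator {c<..} s \<partial>lborel) = ennreal (surv f c)"
  using nn_integral_version_eq_integral[OF assms surv_has_integral[OF assms(1)]] .

lemma nn_integral_version_greaterThanAtMost:
  assumes "nonneg_ac_density f" "AE x in lborel. f x = g x"
  shows "(\<integral>\<^sup>+ s. ennreal (g s) * indicator {c<..d} s \<partial>lborel) = ennreal (surv f c - surv f d)"
proof (cases "c \<le> d")
  case True
  then show ?thesis
    using nn_integral_version_eq_integral[OF assms surv_diff_has_integral[OF assms(1)]] by blast
next
  case False
  then show ?thesis using surv_antimono[OF assms(1), of d c] by (simp add: ennreal_eq_0_iff)
qed


section \<open>Markov chains of failure times\<close>

lemma borel_measurable_uncurried_comp:
  fixes Q :: "real \<Rightarrow> real \<Rightarrow> real" and u v :: "'a \<Rightarrow> real"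
  assumes "(\<lambda>p. Q (fst p) (snd p)) \<in> borel_measurable borel"
    and "u \<in> borel_measurable M" "v \<in> borel_measurable M"
  shows "(\<lambda>y. Q (u y) (v y)) \<in> borel_measurable M"
proof -
  have "(\<lambda>y. (u y, v y)) \<in> M \<rightarrow>\<^sub>M (borel :: (real \<times> real) measure)"
    using measurable_Pair[OF assms(2,3)] by (simp add: borel_prod)
  from measurable_comp[OF this assms(1)] show ?thesis by (simp add: comp_def)
qed

abbreviation lborel_coords :: "nat set \<Rightarrow> (nat \<Rightarrow> real) measure" where
  "lborel_coords I \<equiv> PiM I (\<lambda>_. lborel)"

text \<open>\<open>chain_weight Q m a A n\<close> is the density of the unobserved times \<open>T\<^sub>m\<^sub>+\<^sub>1, ..., T\<^sub>n\<close>
  (coordinates \<open>{Suc m..n}\<close>) given \<open>T\<^sub>m = a\<close>, restricted to \<open>T\<^sub>i \<in> A i\<close>.\<close>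
definition chain_prev :: "nat \<Rightarrow> real \<Rightarrow> (nat \<Rightarrow> real) \<Rightarrow> nat \<Rightarrow> real" where
  "chain_prev m a y i = (if i = Suc m then a else y (i - 1))"

definition chain_weight :: "(nat \<Rightarrow> real \<Rightarrow> real \<Rightarrow> real) \<Rightarrow> nat \<Rightarrow> real \<Rightarrow> (nat \<Rightarrow> real set)
    \<Rightarrow> nat \<Rightarrow> (nat \<Rightarrow> real) \<Rightarrow> ennreal" where
  "chain_weight Q m a A n y =
     (\<Prod>i\<in>{Suc m..n}. ennreal (Q i (chain_prev m a y i) (y i)) * indicator (A i) (y i))"

definition chain_mass :: "(nat \<Rightarrow> real \<Rightarrow> real \<Rightarrow> real) \<Rightarrow> nat \<Rightarrow> real \<Rightarrow> (nat \<Rightarrow> real set)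
    \<Rightarrow> nat \<Rightarrow> ennreal" where
  "chain_mass Q m a A n = (\<integral>\<^sup>+ y. chain_weight Q m a A n y \<partial>lborel_coords {Suc m..n})"

definition kernel_mass :: "(nat \<Rightarrow> real \<Rightarrow> real \<Rightarrow> real) \<Rightarrow> nat \<Rightarrow> real \<Rightarrow> real set \<Rightarrow> ennreal" where
  "kernel_mass Q i b A = (\<integral>\<^sup>+ s. ennreal (Q i b s) * indicator A s \<partial>lborel)"


lemma chain_prev_measurable:
  assumes "i \<in> {Suc m..n}"
  shows "(\<lambda>y. chain_prev m a y i) \<in> borel_measurable (lborel_coords {Suc m..n})"
proof (cases "i = Suc m")
  case False
  then have "i - 1 \<in> {Suc m..n}" using assms by auto
  then show ?thesis using False unfolding chain_prev_def by simp
qed (simp add: chain_prev_def)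

lemma kernel_integrand_measurable:
  fixes Q :: "nat \<Rightarrow> real \<Rightarrow> real \<Rightarrow> real"
  assumes "(\<lambda>p. Q i (fst p) (snd p)) \<in> borel_measurable borel" "A \<in> sets borel"
  shows "(\<lambda>s. ennreal (Q i b s) * indicator A s) \<in> borel_measurable lborel"
proof -
  have "(\<lambda>s. Q i b s) \<in> borel_measurable lborel"
    by (rule borel_measurable_uncurried_comp[OF assms(1)]) auto
  with assms(2) show ?thesis by measurable
qed

lemma chain_weight_measurable:
  assumes "\<And>i. (\<lambda>p. Q i (fst p) (snd p)) \<in> borel_measurable borel" "\<And>i. A i \<in> sets borel"
  shows "chain_weight Q m a A n \<in> borel_measurable (lborel_coords {Suc m..n})"
  unfolding chain_weight_def
proof (intro borel_measurable_prod_ennreal borel_measurable_times_ennreal)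
  fix i assume i: "i \<in> {Suc m..n}"
  have "(\<lambda>y. Q i (chain_prev m a y i) (y i)) \<in> borel_measurable (lborel_coords {Suc m..n})"
    using i by (intro borel_measurable_uncurried_comp[OF assms(1)] chain_prev_measurable) auto
  then show "(\<lambda>y. ennreal (Q i (chain_prev m a y i) (y i))) \<in> borel_measurable (lborel_coords {Suc m..n})"
    by simp
  show "(\<lambda>y. indicator (A i) (y i)) \<in> borel_measurable (lborel_coords {Suc m..n})"
    using i assms(2)[of i] by measurable
qed

lemma chain_weight_Suc:
  assumes "m \<le> n"
  shows "chain_weight Q m a A (Suc n) y = chain_weight Q m a A n y *
     (ennreal (Q (Suc n) (chain_prev m a y (Suc n)) (y (Suc n))) * indicator (A (Suc n)) (y (Suc n)))"
  unfolding chain_weight_def using assms by (simp add: prod.nat_ivl_Suc' mult.commute)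

lemma chain_weight_fun_upd_Suc:
  "chain_weight Q m a A n (y(Suc n := s)) = chain_weight Q m a A n y"
  unfolding chain_weight_def chain_prev_def by (intro prod.cong) auto

lemma chain_weight_nonzero_imp_mem:
  assumes "chain_weight Q m a A n y \<noteq> 0" "i \<in> {Suc m..n}"
  shows "y i \<in> A i"
  using assms unfolding chain_weight_def by (auto simp: indicator_def)

lemma chain_weight_cong:
  assumes "\<And>i. i \<in> {Suc m..n} \<Longrightarrow> A i = B i"
  shows "chain_weight Q m a A n = chain_weight Q m a B n"
  using assms unfolding chain_weight_def by (intro ext prod.cong) auto

lemma chain_mass_cong:
  assumes "\<And>i. i \<in> {Suc m..n} \<Longrightarrow> A i = B i"
  shows "chain_mass Q m a A n = chain_mass Q m a B n"
  using chain_weight_cong[of m n A B Q a] assms by (simp add: chain_mass_def)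

lemma chain_mass_Suc:
  assumes Q: "\<And>i. (\<lambda>p. Q i (fst p) (snd p)) \<in> borel_measurable borel"
    and A: "\<And>i. A i \<in> sets borel"
    and n: "Suc m \<le> n"
  shows "chain_mass Q m a A (Suc n) =
    (\<integral>\<^sup>+ y. chain_weight Q m a A n y * kernel_mass Q (Suc n) (y n) (A (Suc n)) \<partial>lborel_coords {Suc m..n})"
proof -
  interpret product_sigma_finite "\<lambda>_. lborel :: real measure" by standard
  have insert: "{Suc m..Suc n} = insert (Suc n) {Suc m..n}" using n by auto
  have "chain_mass Q m a A (Suc n) =
      (\<integral>\<^sup>+ y. (\<integral>\<^sup>+ s. chain_weight Q m a A (Suc n) (y(Suc n := s)) \<partial>lborel) \<partial>lborel_coords {Suc m..n})"
    unfolding chain_mass_def insert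
    using chain_weight_measurable[OF Q A, where m=m and a=a and n="Suc n"] insert
    by (intro product_nn_integral_insert) auto
  also have "\<dots> = (\<integral>\<^sup>+ y. chain_weight Q m a A n y * kernel_mass Q (Suc n) (y n) (A (Suc n)) \<partial>lborel_coords {Suc m..n})"
  proof (intro nn_integral_cong)
    fix y
    have "chain_prev m a (y(Suc n := s)) (Suc n) = y n" for s
      using n unfolding chain_prev_def by auto
    then have "(\<integral>\<^sup>+ s. chain_weight Q m a A (Suc n) (y(Suc n := s)) \<partial>lborel)
        = (\<integral>\<^sup>+ s. chain_weight Q m a A n y * (ennreal (Q (Suc n) (y n) s) * indicator (A (Suc n)) s) \<partial>lborel)"
      using n by (simp add: chain_weight_Suc chain_weight_fun_upd_Suc)
    also have "\<dots> = chain_weight Q m a A n y * kernel_mass Q (Suc n) (y n) (A (Suc n))"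
      unfolding kernel_mass_def by (intro nn_integral_cmult kernel_integrand_measurable Q A)
    finally show "(\<integral>\<^sup>+ s. chain_weight Q m a A (Suc n) (y(Suc n := s)) \<partial>lborel)
        = chain_weight Q m a A n y * kernel_mass Q (Suc n) (y n) (A (Suc n))" .
  qed
  finally show ?thesis .
qed

lemma chain_mass_first:
  assumes "\<And>i. (\<lambda>p. Q i (fst p) (snd p)) \<in> borel_measurable borel" "\<And>i. A i \<in> sets borel"
  shows "chain_mass Q m a A (Suc m) = kernel_mass Q (Suc m) a (A (Suc m))"
proof -
  interpret product_sigma_finite "\<lambda>_. lborel :: real measure" by standard
  have "(\<lambda>s. ennreal (Q (Suc m) a s) * indicator (A (Suc m)) s) \<in> borel_measurable lborel"
    by (intro kernel_integrand_measurable assms)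
  from product_nn_integral_singleton[OF this[unfolded sets_lborel[symmetric]], of "Suc m"]
  show ?thesis
    unfolding chain_mass_def chain_weight_def kernel_mass_def by (simp add: chain_prev_def)
qed

lemma chain_mass_truncate:
  assumes Q: "\<And>i. (\<lambda>p. Q i (fst p) (snd p)) \<in> borel_measurable borel"
    and A: "\<And>i. A i \<in> sets borel"
    and k: "Suc m \<le> k" "k \<le> n"
    and full: "\<And>i b. i \<in> {Suc k..n} \<Longrightarrow> b \<in> A (i - 1) \<Longrightarrow> kernel_mass Q i b (A i) = 1"
  shows "chain_mass Q m a A n = chain_mass Q m a A k"
  using k(2) full
proof (induction n rule: nat_induct_at_least)
  case (Suc n)
  have "chain_mass Q m a A (Suc n) =
      (\<integral>\<^sup>+ y. chain_weight Q m a A n y * kernel_mass Q (Suc n) (y n) (A (Suc n)) \<partial>lborel_coords {Suc m..n})"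
    using Suc.hyps k by (intro chain_mass_Suc Q A) auto
  also have "\<dots> = chain_mass Q m a A n"
    unfolding chain_mass_def
  proof (intro nn_integral_cong)
    fix y
    show "chain_weight Q m a A n y * kernel_mass Q (Suc n) (y n) (A (Suc n)) = chain_weight Q m a A n y"
    proof (cases "chain_weight Q m a A n y = 0")
      case False
      then have "y n \<in> A n"
        using Suc.hyps k by (intro chain_weight_nonzero_imp_mem) auto
      then show ?thesis using Suc.prems[of "Suc n" "y n"] Suc.hyps by simp
    qed simp
  qed
  also have "\<dots> = chain_mass Q m a A k" using Suc by auto
  finally show ?case .
qed simp

lemma chain_mass_Suc_le:
  assumes Q: "\<And>i. (\<lambda>p. Q i (fst p) (snd p)) \<in> borel_measurable borel"
    and A: "\<And>i. A i \<in> sets borel" and B: "B \<in> sets borel"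
    and n: "Suc m \<le> n"
    and bound: "\<And>b. b \<in> A n \<Longrightarrow> kernel_mass Q (Suc n) b (A (Suc n)) \<le> c * indicator B b"
  shows "chain_mass Q m a A (Suc n) \<le> c * chain_mass Q m a (A(n := A n \<inter> B)) n"
proof -
  have weight: "chain_weight Q m a (A(n := A n \<inter> B)) n y = chain_weight Q m a A n y * indicator B (y n)" for y
  proof -
    have nin: "n \<in> {Suc m..n}" using n by auto
    show ?thesis
      unfolding chain_weight_def prod.remove[OF finite_atLeastAtMost nin]
      by (simp add: indicator_inter_arith ac_simps)
  qed
  have "chain_mass Q m a A (Suc n) =
      (\<integral>\<^sup>+ y. chain_weight Q m a A n y * kernel_mass Q (Suc n) (y n) (A (Suc n)) \<partial>lborel_coords {Suc m..n})"
    by (rule chain_mass_Suc[OF Q A n])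
  also have "\<dots> \<le> (\<integral>\<^sup>+ y. c * chain_weight Q m a (A(n := A n \<inter> B)) n y \<partial>lborel_coords {Suc m..n})"
  proof (intro nn_integral_mono)
    fix y
    show "chain_weight Q m a A n y * kernel_mass Q (Suc n) (y n) (A (Suc n))
        \<le> c * chain_weight Q m a (A(n := A n \<inter> B)) n y"
    proof (cases "chain_weight Q m a A n y = 0")
      case False
      then have "y n \<in> A n" using n by (intro chain_weight_nonzero_imp_mem) auto
      then have "chain_weight Q m a A n y * kernel_mass Q (Suc n) (y n) (A (Suc n))
          \<le> chain_weight Q m a A n y * (c * indicator B (y n))"
        using bound by (intro mult_left_mono) auto
      then show ?thesis unfolding weight by (simp add: ac_simps)
    qed simp
  qed
  also have "\<dots> = c * chain_mass Q m a (A(n := A n \<inter> B)) n"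
    unfolding chain_mass_def using A B
    by (intro nn_integral_cmult chain_weight_measurable Q) auto
  finally show ?thesis .
qed

definition window_at :: "nat \<Rightarrow> real \<Rightarrow> real \<Rightarrow> nat \<Rightarrow> real set" where
  "window_at k t u i = (if i = k then {t<..u} else {t<..})"

lemma window_at_sets [measurable]: "window_at k t u i \<in> sets borel"
  by (simp add: window_at_def)

lemma chain_mass_window_Suc_le:
  assumes Q: "\<And>i. (\<lambda>p. Q i (fst p) (snd p)) \<in> borel_measurable borel"
    and n: "Suc m \<le> n"
    and bound: "\<And>b. t < b \<Longrightarrow> kernel_mass Q (Suc n) b {t<..u} \<le> c * indicator {..u} b"
  shows "chain_mass Q m a (window_at (Suc n) t u) (Suc n) \<le> c * chain_mass Q m a (window_at n t u) n"
proof -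
  have "chain_mass Q m a (window_at (Suc n) t u) (Suc n)
      \<le> c * chain_mass Q m a ((window_at (Suc n) t u)(n := window_at (Suc n) t u n \<inter> {..u})) n"
    using bound by (intro chain_mass_Suc_le Q n) (auto simp: window_at_def)
  also have "\<dots> = c * chain_mass Q m a (window_at n t u) n"
    by (subst chain_mass_cong[where B="window_at n t u"]) (auto simp: window_at_def)
  finally show ?thesis .
qed

lemma chain_mass_window_le_first:
  assumes Q: "\<And>i. (\<lambda>p. Q i (fst p) (snd p)) \<in> borel_measurable borel"
    and j: "Suc m \<le> j"
    and bound: "\<And>i b. i \<in> {Suc (Suc m)..j} \<Longrightarrow> t < b \<Longrightarrow> kernel_mass Q i b {t<..u} \<le> indicator {..u} b"
  shows "chain_mass Q m a (window_at j t u) j \<le> chain_mass Q m a (window_at (Suc m) t u) (Suc m)"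
  using j bound
proof (induction j rule: nat_induct_at_least)
  case (Suc n)
  have "chain_mass Q m a (window_at (Suc n) t u) (Suc n) \<le> 1 * chain_mass Q m a (window_at n t u) n"
    using Suc by (intro chain_mass_window_Suc_le Q) auto
  also have "\<dots> \<le> chain_mass Q m a (window_at (Suc m) t u) (Suc m)"
    using Suc by auto
  finally show ?case .
qed simp


section \<open>Conditional hazards of Markov densities\<close>

lemma indicator_Pi_eq_prod:
  assumes "finite U"
  shows "indicator (Pi U A) y = (\<Prod>i\<in>U. indicator (A i) (y i) :: 'a :: comm_semiring_1)"
proof (cases "y \<in> Pi U A")
  case False
  then obtain i where "i \<in> U" "y i \<notin> A i" by auto
  with assms have "(\<Prod>i\<in>U. indicator (A i) (y i) :: 'a) = 0" by (auto intro!: prod_zero bexI[of _ i])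
  with False show ?thesis by simp
qed (auto simp: indicator_def intro!: prod.neutral)

text \<open>Translation invariance of Lebesgue measure in one coordinate.\<close>
lemma AE_PiM_coord_minus_notin:
  fixes c :: "(nat \<Rightarrow> real) \<Rightarrow> real"
  assumes U: "finite U" "i \<in> U" and N: "N \<in> null_sets lborel"
    and c: "c \<in> borel_measurable (lborel_coords U)"
    and c_indep: "\<And>y s. c (y(i := s)) = c y"
  shows "AE y in lborel_coords U. y i - c y \<notin> N"
proof -
  interpret product_sigma_finite "\<lambda>_. lborel :: real measure" by standard
  have N_borel [measurable]: "N \<in> sets borel" using N by (simp add: null_sets_def)
  define E where "E = {y \<in> space (lborel_coords U). y i - c y \<in> N}"
  have E: "E \<in> sets (lborel_coords U)"
    unfolding E_def using c U by measurable
  have U_eq: "insert i (U - {i}) = U" using U by auto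
  have "emeasure (lborel_coords U) E = integral\<^sup>N (lborel_coords (insert i (U - {i}))) (indicator E)"
    using E U_eq by (simp add: nn_integral_indicator)
  also have "\<dots> = (\<integral>\<^sup>+ x. (\<integral>\<^sup>+ s. indicator E (x(i := s)) \<partial>lborel) \<partial>lborel_coords (U - {i}))"
    using E U U_eq by (intro product_nn_integral_insert) auto
  also have "\<dots> = (\<integral>\<^sup>+ x. 0 \<partial>lborel_coords (U - {i}))"
  proof (rule nn_integral_cong)
    fix x assume x: "x \<in> space (lborel_coords (U - {i}))"
    have "(\<integral>\<^sup>+ s. indicator E (x(i := s)) \<partial>lborel) = (\<integral>\<^sup>+ s. indicator N (- c x + 1 * s) \<partial>lborel)"
    proof (intro nn_integral_cong)
      fix s
      have "x(i := s) \<in> space (lborel_coords U)"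
        using x U unfolding space_PiM PiE_def extensional_def by auto
      then show "indicator E (x(i := s)) = (indicator N (- c x + 1 * s) :: ennreal)"
        unfolding E_def using c_indep[of x s] by (auto simp: indicator_def)
    qed
    also have "\<dots> = integral\<^sup>N lborel (indicator N)"
      using nn_integral_real_affine[of "indicator N" 1 "- c x"] by simp
    also have "\<dots> = 0" using N by (simp add: null_sets_def)
    finally show "(\<integral>\<^sup>+ s. indicator E (x(i := s)) \<partial>lborel) = 0" .
  qed
  finally have "E \<in> null_sets (lborel_coords U)" using E by auto
  then show ?thesis by (rule AE_I') (auto simp: E_def)
qed

definition hazard_quotient :: "((nat \<Rightarrow> real) \<Rightarrow> real) \<Rightarrow> nat \<Rightarrow> nat set \<Rightarrow> (nat \<Rightarrow> real)
    \<Rightarrow> real \<Rightarrow> nat \<Rightarrow> real \<Rightarrow> real" where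
  "hazard_quotient g n Obs x t j D =
     enn2real (hist_mass g n Obs x t (\<lambda>i s. i = j \<longrightarrow> s \<le> t + D))
     / (D * enn2real (hist_mass g n Obs x t (\<lambda>_ _. True)))"

lemma cond_hazard_eq_Lim: "cond_hazard g n Obs x t j = Lim (at_right 0) (hazard_quotient g n Obs x t j)"
  unfolding cond_hazard_def hazard_quotient_def ..

lemma hist_mass_le_all: "hist_mass g n Obs x t P \<le> hist_mass g n Obs x t (\<lambda>_ _. True)"
  unfolding hist_mass_def by (intro nn_integral_mono mult_left_mono) (auto simp: indicator_def)

lemma finite_downward_closed_eq_atLeastAtMost:
  fixes Ob :: "nat set"
  assumes "finite Ob" "0 \<notin> Ob" and closed: "\<And>j. Suc j \<in> Ob \<Longrightarrow> 0 < j \<Longrightarrow> j \<in> Ob"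
  obtains m where "Ob = {1..m}"
proof (cases "Ob = {}")
  case True
  then show ?thesis using that[of 0] by simp
next
  case False
  have below: "j \<in> Ob" if "i \<in> Ob" "1 \<le> j" "j \<le> i" for i j
    using that
  proof (induction i)
    case (Suc i)
    then show ?case using closed[of i] by (cases "j = Suc i") auto
  qed simp
  have "Ob = {1..Max Ob}"
  proof (intro equalityI subsetI)
    fix j assume "j \<in> Ob"
    then show "j \<in> {1..Max Ob}" using assms(1,2) by (cases j) auto
  next
    fix j assume "j \<in> {1..Max Ob}"
    then show "j \<in> Ob" using below[of "Max Ob" j] assms(1) False by auto
  qed
  then show ?thesis by (rule that)
qed

text \<open>
  Joint densities of Markov type: \<open>Q i b\<close> is the density of the \<open>i\<close>-th time given that the
  previous one equals \<open>b\<close>. The densities need only be Lebesgue measurable, so integrals over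
  the unobserved coordinates are computed with a Borel version \<open>Q'\<close>; for each \<open>i\<close> the two
  differ only where \<open>s - \<kappa> b\<close> falls into a null set. The last two assumptions say that once
  the previous time exceeds \<open>t\<close> the next one does so surely, and falls into \<open>(t, t + D]\<close>
  only with a probability vanishing uniformly as \<open>D \<rightarrow> 0\<close>.\<close>
locale markov_density =
  fixes g :: "(nat \<Rightarrow> real) \<Rightarrow> real" and n :: nat and Q Q' :: "nat \<Rightarrow> real \<Rightarrow> real \<Rightarrow> real"
  assumes density_eq: "\<And>z. g z = (\<Prod>i=1..n. Q i (prevt z i) (z i))"
    and kernel_nonneg: "\<And>i b s. 0 \<le> Q i b s"
    and kernel_zero_below: "\<And>i b s. s < b \<Longrightarrow> Q i b s = 0"
    and version_measurable: "\<And>i. (\<lambda>p. Q' i (fst p) (snd p)) \<in> borel_measurable borel"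
    and version_AE: "\<And>i. i \<in> {1..n} \<Longrightarrow>
      \<exists>N\<in>null_sets lborel. \<exists>\<kappa>. \<forall>b s. Q i b s \<noteq> Q' i b s \<longrightarrow> s - \<kappa> * b \<in> N"
    and kernel_mass_one: "\<And>i t b. i \<in> {1..n} \<Longrightarrow> 0 \<le> t \<Longrightarrow> t < b \<Longrightarrow> kernel_mass Q' i b {t<..} = 1"
    and kernel_mass_window: "\<And>i t. i \<in> {1..n} \<Longrightarrow> 0 \<le> t \<Longrightarrow>
      \<exists>\<epsilon>. (\<epsilon> \<longlongrightarrow> 0) (at_right 0) \<and> (\<forall>D>0. 0 \<le> \<epsilon> D \<and> \<epsilon> D \<le> 1) \<and>
          (\<forall>D>0. \<forall>b>t. kernel_mass Q' i b {t<..t + D} \<le> ennreal (\<epsilon> D) * indicator {..t + D} b)"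
begin

definition observed_weight :: "nat \<Rightarrow> (nat \<Rightarrow> real) \<Rightarrow> real" where
  "observed_weight m x = (\<Prod>i=1..m. Q i (prevt x i) (x i))"

lemma observed_weight_nonneg: "0 \<le> observed_weight m x"
  unfolding observed_weight_def by (intro prod_nonneg kernel_nonneg)

lemma density_merge:
  assumes "m \<le> n"
  shows "g (merge {1..m} {Suc m..n} (x, y))
    = observed_weight m x * (\<Prod>i\<in>{Suc m..n}. Q i (chain_prev m (prevt x (Suc m)) y i) (y i))"
proof -
  define z where "z = merge {1..m} {Suc m..n} (x, y)"
  have z_obs: "z i = x i" if "i \<in> {1..m}" for i using that unfolding z_def merge_def by auto
  have z_new: "z i = y i" if "i \<in> {Suc m..n}" for i using that unfolding z_def merge_def by auto
  have prev_obs: "prevt z i = prevt x i" if "i \<in> {1..m}" for i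
  proof (cases "i = 1")
    case False
    then have "i - 1 \<in> {1..m}" using that by auto
    then show ?thesis using z_obs False unfolding prevt_def by auto
  qed (simp add: prevt_def)
  have prev_new: "prevt z i = chain_prev m (prevt x (Suc m)) y i" if "i \<in> {Suc m..n}" for i
  proof (cases "i = Suc m")
    case True
    then show ?thesis using z_obs[of m] unfolding prevt_def chain_prev_def by auto
  next
    case False
    then have "i - 1 \<in> {Suc m..n}" "i \<noteq> 1" using that by auto
    then show ?thesis using z_new False unfolding prevt_def chain_prev_def by auto
  qed
  have "{1..n} = {1..m} \<union> {Suc m..n}" using assms by auto
  then have "g z = (\<Prod>i\<in>{1..m}. Q i (prevt z i) (z i)) * (\<Prod>i\<in>{Suc m..n}. Q i (prevt z i) (z i))"
    unfolding density_eq by (simp add: prod.union_disjoint)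
  also have "\<dots> = observed_weight m x * (\<Prod>i\<in>{Suc m..n}. Q i (chain_prev m (prevt x (Suc m)) y i) (y i))"
    unfolding observed_weight_def using prev_obs prev_new z_obs z_new
    by (intro arg_cong2[where f="(*)"] prod.cong) auto
  finally show ?thesis unfolding z_def .
qed

lemma chain_weight_AE_version:
  "AE y in lborel_coords {Suc m..n}. chain_weight Q m a A n y = chain_weight Q' m a A n y"
proof -
  have "AE y in lborel_coords {Suc m..n}. \<forall>i\<in>{Suc m..n}.
      Q i (chain_prev m a y i) (y i) = Q' i (chain_prev m a y i) (y i)"
  proof (intro AE_finite_allI)
    fix i assume i: "i \<in> {Suc m..n}"
    then obtain N \<kappa> where N: "N \<in> null_sets lborel"
      and differ: "\<And>b s. Q i b s \<noteq> Q' i b s \<Longrightarrow> s - \<kappa> * b \<in> N"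
      using version_AE[of i] by auto
    have "AE y in lborel_coords {Suc m..n}. y i - \<kappa> * chain_prev m a y i \<notin> N"
    proof (rule AE_PiM_coord_minus_notin[OF finite_atLeastAtMost i N])
      show "(\<lambda>y. \<kappa> * chain_prev m a y i) \<in> borel_measurable (lborel_coords {Suc m..n})"
        using chain_prev_measurable[OF i] by measurable
      show "\<kappa> * chain_prev m a (y(i := s)) i = \<kappa> * chain_prev m a y i" for y s
        using i unfolding chain_prev_def by auto
    qed
    then show "AE y in lborel_coords {Suc m..n}. Q i (chain_prev m a y i) (y i) = Q' i (chain_prev m a y i) (y i)"
      by eventually_elim (use differ in blast)
  qed simp
  then show ?thesis by eventually_elim (simp add: chain_weight_def)
qed

lemma hist_mass_eq_chain_mass:
  assumes m: "m \<le> n" and P: "\<And>i. Measurable.pred borel (P i)"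
  shows "hist_mass g n {1..m} x t P
    = ennreal (observed_weight m x) * chain_mass Q' m (prevt x (Suc m)) (\<lambda>i. {s. t < s \<and> P i s}) n"
proof -
  define a where "a = prevt x (Suc m)"
  define A where "A = (\<lambda>i. {s. t < s \<and> P i s})"
  have unobserved: "{1..n} - {1..m} = {Suc m..n}" using m by auto
  have "ennreal (g (merge {1..m} {Suc m..n} (x, y)))
      * indicator {y. (\<forall>i\<in>{Suc m..n}. t < y i) \<and> (\<forall>i\<in>{Suc m..n}. P i (y i))} y
      = ennreal (observed_weight m x) * chain_weight Q m a A n y" for y
  proof -
    have "{y. (\<forall>i\<in>{Suc m..n}. t < y i) \<and> (\<forall>i\<in>{Suc m..n}. P i (y i))} = Pi {Suc m..n} A"
      unfolding A_def by auto
    then show ?thesis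
      unfolding density_merge[OF m] chain_weight_def a_def
      using observed_weight_nonneg kernel_nonneg
      by (simp add: indicator_Pi_eq_prod ennreal_mult prod_nonneg prod_ennreal prod.distrib mult.assoc)
  qed
  then have "hist_mass g n {1..m} x t P
      = (\<integral>\<^sup>+ y. ennreal (observed_weight m x) * chain_weight Q m a A n y \<partial>lborel_coords {Suc m..n})"
    unfolding hist_mass_def unobserved by simp
  also have "\<dots> = (\<integral>\<^sup>+ y. ennreal (observed_weight m x) * chain_weight Q' m a A n y \<partial>lborel_coords {Suc m..n})"
    using chain_weight_AE_version[of m a A] by (intro nn_integral_cong_AE) (auto elim: AE_mp)
  also have "\<dots> = ennreal (observed_weight m x) * chain_mass Q' m a A n"
    unfolding chain_mass_def A_def using P
    by (intro nn_integral_cmult chain_weight_measurable version_measurable) auto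
  finally show ?thesis unfolding a_def A_def .
qed

lemma hist_mass_window:
  assumes k: "k \<in> {Suc m..n}" and t: "0 \<le> t"
  shows "hist_mass g n {1..m} x t (\<lambda>i s. i = k \<longrightarrow> s \<le> u)
    = ennreal (observed_weight m x) * chain_mass Q' m (prevt x (Suc m)) (window_at k t u) k"
proof -
  have "(\<lambda>i. {s. t < s \<and> (i = k \<longrightarrow> s \<le> u)}) = window_at k t u"
    by (intro ext) (auto simp: window_at_def)
  then have "hist_mass g n {1..m} x t (\<lambda>i s. i = k \<longrightarrow> s \<le> u)
      = ennreal (observed_weight m x) * chain_mass Q' m (prevt x (Suc m)) (window_at k t u) n"
    using k hist_mass_eq_chain_mass[of m "\<lambda>i s. i = k \<longrightarrow> s \<le> u"] by simp
  also have "chain_mass Q' m (prevt x (Suc m)) (window_at k t u) n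
      = chain_mass Q' m (prevt x (Suc m)) (window_at k t u) k"
  proof (rule chain_mass_truncate[OF version_measurable window_at_sets])
    fix i b assume "i \<in> {Suc k..n}" "b \<in> window_at k t u (i - 1)"
    then show "kernel_mass Q' i b (window_at k t u i) = 1"
      using k t by (intro kernel_mass_one[THEN trans[rotated]]) (auto simp: window_at_def split: if_splits)
  qed (use k in auto)
  finally show ?thesis .
qed

lemma hist_mass_all:
  assumes m: "m < n" and t: "0 \<le> t"
  shows "hist_mass g n {1..m} x t (\<lambda>_ _. True)
    = ennreal (observed_weight m x) * kernel_mass Q' (Suc m) (prevt x (Suc m)) {t<..}"
proof -
  have "hist_mass g n {1..m} x t (\<lambda>_ _. True)
      = ennreal (observed_weight m x) * chain_mass Q' m (prevt x (Suc m)) (\<lambda>_. {t<..}) n"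
    using m hist_mass_eq_chain_mass[of m "\<lambda>_ _. True"] by (simp add: greaterThan_def)
  also have "chain_mass Q' m (prevt x (Suc m)) (\<lambda>_. {t<..}) n
      = chain_mass Q' m (prevt x (Suc m)) (\<lambda>_. {t<..}) (Suc m)"
    using m t by (intro chain_mass_truncate[OF version_measurable] kernel_mass_one) auto
  also have "\<dots> = kernel_mass Q' (Suc m) (prevt x (Suc m)) {t<..}"
    by (intro chain_mass_first version_measurable) simp
  finally show ?thesis .
qed

lemma possible_hist_observed_weight_pos:
  assumes "possible_hist g n {1..m} x t" "m < n" "0 \<le> t"
  shows "0 < observed_weight m x"
proof -
  have "0 < ennreal (observed_weight m x) * kernel_mass Q' (Suc m) (prevt x (Suc m)) {t<..}"
    using assms(1) unfolding possible_hist_def hist_mass_all[OF assms(2,3)] by auto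
  then have "observed_weight m x \<noteq> 0" by (intro notI) simp
  then show ?thesis using observed_weight_nonneg[of m x] by simp
qed

lemma hazard_quotient_next:
  assumes pos: "possible_hist g n {1..m} x t" and m: "m < n" and t: "0 \<le> t" and D: "0 < D"
  shows "hazard_quotient g n {1..m} x t (Suc m) D
    = enn2real (kernel_mass Q' (Suc m) (prevt x (Suc m)) {t<..t + D})
      / (D * enn2real (kernel_mass Q' (Suc m) (prevt x (Suc m)) {t<..}))"
proof -
  have C: "0 < observed_weight m x" by (rule possible_hist_observed_weight_pos[OF pos m t])
  have "hist_mass g n {1..m} x t (\<lambda>i s. i = Suc m \<longrightarrow> s \<le> t + D)
      = ennreal (observed_weight m x) * chain_mass Q' m (prevt x (Suc m)) (window_at (Suc m) t (t + D)) (Suc m)"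
    using m t by (intro hist_mass_window) auto
  also have "\<dots> = ennreal (observed_weight m x) * kernel_mass Q' (Suc m) (prevt x (Suc m)) {t<..t + D}"
    by (simp add: chain_mass_first version_measurable window_at_def)
  finally show ?thesis
    using C D unfolding hazard_quotient_def hist_mass_all[OF m t]
    by (simp add: enn2real_mult)
qed

lemma kernel_mass_window_le_indicator:
  assumes i: "i \<in> {1..n}" and t: "0 \<le> t" "t < b" and D: "0 < D"
  shows "kernel_mass Q' i b {t<..t + D} \<le> indicator {..t + D} b"
proof -
  obtain \<epsilon> where "\<forall>D>0. 0 \<le> \<epsilon> D \<and> \<epsilon> D \<le> 1"
    "\<forall>D>0. \<forall>b>t. kernel_mass Q' i b {t<..t + D} \<le> ennreal (\<epsilon> D) * indicator {..t + D} b"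
    using kernel_mass_window[OF i t(1)] by auto
  with t D have "kernel_mass Q' i b {t<..t + D} \<le> ennreal (\<epsilon> D) * indicator {..t + D} b"
    "ennreal (\<epsilon> D) * indicator {..t + D} b \<le> (indicator {..t + D} b :: ennreal)"
    by (auto simp: indicator_def)
  then show ?thesis by (rule order_trans)
qed

text \<open>A later component can fail in \<open>(t, t + D]\<close> only if the next one does, and then only
  with a probability \<open>\<epsilon> D\<close> that vanishes as \<open>D \<rightarrow> 0\<close>.\<close>
lemma hazard_quotient_later:
  assumes pos: "possible_hist g n {1..m} x t" and m: "m < n" and t: "0 \<le> t"
    and k: "k \<in> {Suc (Suc m)..n}"
  obtains \<epsilon> where "(\<epsilon> \<longlongrightarrow> 0) (at_right 0)" "\<And>D. 0 < D \<Longrightarrow> 0 \<le> \<epsilon> D"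
    "\<And>D. 0 < D \<Longrightarrow> hazard_quotient g n {1..m} x t k D \<le> \<epsilon> D * hazard_quotient g n {1..m} x t (Suc m) D"
proof -
  obtain \<epsilon> where \<epsilon>: "(\<epsilon> \<longlongrightarrow> 0) (at_right 0)" "\<And>D. 0 < D \<Longrightarrow> 0 \<le> \<epsilon> D"
    and window_k: "\<And>D b. 0 < D \<Longrightarrow> t < b \<Longrightarrow> kernel_mass Q' k b {t<..t + D} \<le> ennreal (\<epsilon> D) * indicator {..t + D} b"
    using kernel_mass_window[of k t] k t by auto
  obtain j where j: "k = Suc j" "Suc m \<le> j" using k by (cases k) auto
  let ?a = "prevt x (Suc m)" and ?C = "ennreal (observed_weight m x)"
  have bound: "hist_mass g n {1..m} x t (\<lambda>i s. i = k \<longrightarrow> s \<le> t + D)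
      \<le> ennreal (\<epsilon> D) * hist_mass g n {1..m} x t (\<lambda>i s. i = Suc m \<longrightarrow> s \<le> t + D)" if D: "0 < D" for D
  proof -
    have "chain_mass Q' m ?a (window_at k t (t + D)) k \<le> ennreal (\<epsilon> D) * chain_mass Q' m ?a (window_at j t (t + D)) j"
      unfolding j(1) using window_k[OF D] j by (intro chain_mass_window_Suc_le version_measurable) auto
    also have "\<dots> \<le> ennreal (\<epsilon> D) * chain_mass Q' m ?a (window_at (Suc m) t (t + D)) (Suc m)"
      using D j k t by (intro mult_left_mono chain_mass_window_le_first version_measurable kernel_mass_window_le_indicator) auto
    finally have "?C * chain_mass Q' m ?a (window_at k t (t + D)) k
        \<le> ennreal (\<epsilon> D) * (?C * chain_mass Q' m ?a (window_at (Suc m) t (t + D)) (Suc m))"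
      by (subst mult.left_commute) (rule mult_left_mono, simp_all)
    moreover have "k \<in> {Suc m..n}" "Suc m \<in> {Suc m..n}" using k m by auto
    ultimately show ?thesis by (simp only: hist_mass_window t)
  qed
  show ?thesis
  proof (rule that[OF \<epsilon>])
    fix D :: real assume D: "0 < D"
    have "hist_mass g n {1..m} x t (\<lambda>i s. i = Suc m \<longrightarrow> s \<le> t + D) < \<infinity>"
      using le_less_trans[OF hist_mass_le_all] pos unfolding possible_hist_def by blast
    then have "enn2real (hist_mass g n {1..m} x t (\<lambda>i s. i = k \<longrightarrow> s \<le> t + D))
        \<le> \<epsilon> D * enn2real (hist_mass g n {1..m} x t (\<lambda>i s. i = Suc m \<longrightarrow> s \<le> t + D))"
      using enn2real_mono[OF bound[OF D]] \<epsilon>(2)[OF D] by (simp add: enn2real_mult ennreal_mult_less_top)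
    then show "hazard_quotient g n {1..m} x t k D \<le> \<epsilon> D * hazard_quotient g n {1..m} x t (Suc m) D"
      unfolding hazard_quotient_def using D by (simp add: divide_right_mono)
  qed
qed

lemma cond_hazard_initial_segment:
  assumes pos: "possible_hist g n {1..m} x t" and m: "m < n" and t: "0 \<le> t"
    and next_lim: "(hazard_quotient g n {1..m} x t (Suc m) \<longlongrightarrow> L) (at_right 0)"
    and k: "k \<in> {Suc m..n}"
  shows "cond_hazard g n {1..m} x t k = (if k = Suc m then L else 0)"
proof (cases "k = Suc m")
  case True
  then show ?thesis using next_lim by (simp add: cond_hazard_eq_Lim tendsto_Lim)
next
  case False
  then have k': "k \<in> {Suc (Suc m)..n}" using k by auto
  obtain \<epsilon> where \<epsilon>: "(\<epsilon> \<longlongrightarrow> 0) (at_right 0)" "\<And>D. 0 < D \<Longrightarrow> 0 \<le> \<epsilon> D"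
    and le: "\<And>D. 0 < D \<Longrightarrow> hazard_quotient g n {1..m} x t k D \<le> \<epsilon> D * hazard_quotient g n {1..m} x t (Suc m) D"
    using hazard_quotient_later[OF pos m t k'] by blast
  have "(hazard_quotient g n {1..m} x t k \<longlongrightarrow> 0) (at_right 0)"
  proof (rule tendsto_sandwich[of "\<lambda>_. 0" _ _ "\<lambda>D. \<epsilon> D * hazard_quotient g n {1..m} x t (Suc m) D"])
    show "\<forall>\<^sub>F D in at_right 0. 0 \<le> hazard_quotient g n {1..m} x t k D"
      using eventually_at_right_less[of "0::real"]
      by eventually_elim (simp add: hazard_quotient_def)
    show "\<forall>\<^sub>F D in at_right 0. hazard_quotient g n {1..m} x t k D \<le> \<epsilon> D * hazard_quotient g n {1..m} x t (Suc m) D"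
      using eventually_at_right_less[of "0::real"] by eventually_elim (rule le)
    show "((\<lambda>D. \<epsilon> D * hazard_quotient g n {1..m} x t (Suc m) D) \<longlongrightarrow> 0) (at_right 0)"
      using tendsto_mult[OF \<epsilon>(1) next_lim] by simp
  qed simp
  then show ?thesis using False by (simp add: cond_hazard_eq_Lim tendsto_Lim)
qed

text \<open>A history of positive likelihood cannot observe \<open>T\<^sub>j\<^sub>+\<^sub>1 \<le> t\<close> while \<open>T\<^sub>j > t\<close>.\<close>
lemma possible_hist_initial_segment:
  assumes Ob: "Ob \<subseteq> {1..n}" and obs_le: "\<And>i. i \<in> Ob \<Longrightarrow> x i \<le> t"
    and pos: "possible_hist g n Ob x t"
  obtains m where "Ob = {1..m}"
proof (rule finite_downward_closed_eq_atLeastAtMost)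
  show "finite Ob" "0 \<notin> Ob" using Ob finite_subset by auto
  fix j assume j: "Suc j \<in> Ob" "0 < j"
  show "j \<in> Ob"
  proof (rule ccontr)
    assume "j \<notin> Ob"
    then have j_unobs: "j \<in> {1..n} - Ob" using j Ob by auto
    have "hist_mass g n Ob x t (\<lambda>_ _. True) = (\<integral>\<^sup>+ y. 0 \<partial>lborel_coords ({1..n} - Ob))"
      unfolding hist_mass_def
    proof (rule nn_integral_cong)
      fix y
      let ?z = "merge Ob ({1..n} - Ob) (x, y)"
      show "ennreal (g ?z) * indicator {y. (\<forall>i\<in>{1..n} - Ob. t < y i) \<and> (\<forall>i\<in>{1..n} - Ob. True)} y = 0"
      proof (cases "t < y j")
        case True
        have "?z j = y j" "?z (Suc j) = x (Suc j)" "prevt ?z (Suc j) = ?z j"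
          using j j_unobs unfolding merge_def prevt_def by auto
        then have "Q (Suc j) (prevt ?z (Suc j)) (?z (Suc j)) = 0"
          using True obs_le[OF j(1)] by (intro kernel_zero_below) simp
        moreover have "Suc j \<in> {1..n}" using j Ob by auto
        ultimately have "g ?z = 0" unfolding density_eq by (intro prod_zero) auto
        then show ?thesis by simp
      qed (use j_unobs in \<open>auto simp: indicator_def\<close>)
    qed
    then show False using pos unfolding possible_hist_def by simp
  qed
qed

end


section \<open>The generalized Yule and the replacement process\<close>

text \<open>\<open>h\<close> is either \<open>f\<close> itself or a Borel version of it; the normalisation always uses \<open>f\<close>.\<close>
definition yule_kernel :: "(nat \<Rightarrow> real \<Rightarrow> real) \<Rightarrow> (nat \<Rightarrow> real \<Rightarrow> real) \<Rightarrow> nat \<Rightarrow> real \<Rightarrow> real \<Rightarrow> real" where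
  "yule_kernel f h i b s = (if 1 \<le> i \<and> b < s then h i s / surv (f i) b else 0)"

definition repl_kernel :: "(nat \<Rightarrow> real \<Rightarrow> real) \<Rightarrow> nat \<Rightarrow> real \<Rightarrow> real \<Rightarrow> real" where
  "repl_kernel h i b s = (if 1 \<le> i then h i (s - b) else 0)"

lemma yule_dens_eq_prod: "yule_dens f n z = (\<Prod>i=1..n. yule_kernel f f i (prevt z i) (z i))"
proof (cases "\<forall>i\<in>{1..n}. prevt z i < z i")
  case True
  then show ?thesis by (auto simp: yule_dens_def yule_kernel_def intro!: prod.cong)
next
  case False
  then obtain i where "i \<in> {1..n}" "\<not> prevt z i < z i" by auto
  then have "(\<Prod>i=1..n. yule_kernel f f i (prevt z i) (z i)) = 0"
    by (intro prod_zero) (auto simp: yule_kernel_def intro!: bexI[of _ i])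
  moreover have "yule_dens f n z = 0" unfolding yule_dens_def by (rule if_not_P[OF False])
  ultimately show ?thesis by simp
qed

lemma repl_dens_eq_prod: "repl_dens f n z = (\<Prod>i=1..n. repl_kernel f i (prevt z i) (z i))"
  unfolding repl_dens_def repl_kernel_def by (intro prod.cong) auto

lemma nonneg_ac_density_family_borel_version:
  assumes "\<And>i. 1 \<le> i \<Longrightarrow> nonneg_ac_density (f i)"
  obtains fb where "\<And>i. fb i \<in> borel_measurable borel" "\<And>i. 1 \<le> i \<Longrightarrow> AE x in lborel. f i x = fb i x"
proof -
  have "\<exists>g. g \<in> borel_measurable borel \<and> (1 \<le> i \<longrightarrow> (AE x in lborel. f i x = g x))" for i
  proof (cases "1 \<le> i")
    case True
    then show ?thesis using nonneg_ac_density_borel_version[OF assms[OF True]] by metis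
  qed (auto intro!: exI[of _ "\<lambda>_. 0"])
  then show ?thesis using that by metis
qed

lemma borel_measurable_fst_real [measurable]: "fst \<in> borel_measurable (borel :: (real \<times> real) measure)"
  using measurable_fst[of "borel :: real measure" "borel :: real measure"] by (simp add: borel_prod)

lemma borel_measurable_snd_real [measurable]: "snd \<in> borel_measurable (borel :: (real \<times> real) measure)"
  using measurable_snd[of "borel :: real measure" "borel :: real measure"] by (simp add: borel_prod)

locale hazard_family =
  fixes f h fb :: "nat \<Rightarrow> real \<Rightarrow> real"
  assumes density: "\<And>i. 1 \<le> i \<Longrightarrow> nonneg_ac_density (f i)"
    and surv_pos: "\<And>i t. 1 \<le> i \<Longrightarrow> 0 \<le> t \<Longrightarrow> 0 < surv (f i) t"
    and hazard: "\<And>i. 1 \<le> i \<Longrightarrow> is_hazard_rate (f i) (h i)"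
    and version_borel: "\<And>i. fb i \<in> borel_measurable borel"
    and version_AE: "\<And>i. 1 \<le> i \<Longrightarrow> AE x in lborel. f i x = fb i x"
begin

lemma version_AE_null_set:
  assumes "1 \<le> i"
  obtains N where "N \<in> null_sets lborel" "\<And>s. f i s \<noteq> fb i s \<Longrightarrow> s \<in> N"
  using version_AE[OF assms] unfolding eventually_ae_filter by auto

lemma surv_right_continuous:
  assumes "1 \<le> i" "0 \<le> t"
  shows "((\<lambda>D. surv (f i) (t + D)) \<longlongrightarrow> surv (f i) t) (at_right 0)"
  using assms by (intro surv_tendsto_at_right[OF hazard] surv_pos)

lemma kernel_mass_yule:
  assumes i: "1 \<le> i" and b: "0 < surv (f i) b"
  shows "kernel_mass (yule_kernel f fb) i b {t<..} = ennreal (surv (f i) (max b t) / surv (f i) b)"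
    and "kernel_mass (yule_kernel f fb) i b {t<..u}
      = ennreal ((surv (f i) (max b t) - surv (f i) u) / surv (f i) b)"
proof -
  have restrict: "kernel_mass (yule_kernel f fb) i b A
      = ennreal (1 / surv (f i) b) * (\<integral>\<^sup>+ s. ennreal (fb i s) * indicator ({b<..} \<inter> A) s \<partial>lborel)"
    if "A \<in> sets borel" for A
  proof -
    have [measurable]: "fb i \<in> borel_measurable borel" "{b<..} \<inter> A \<in> sets borel"
      using version_borel that by auto
    have "kernel_mass (yule_kernel f fb) i b A
        = (\<integral>\<^sup>+ s. ennreal (1 / surv (f i) b) * (ennreal (fb i s) * indicator ({b<..} \<inter> A) s) \<partial>lborel)"
      unfolding kernel_mass_def yule_kernel_def using i b
      by (intro nn_integral_cong) (auto simp: indicator_def ennreal_mult'' divide_inverse mult.commute)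
    also have "\<dots> = ennreal (1 / surv (f i) b) * (\<integral>\<^sup>+ s. ennreal (fb i s) * indicator ({b<..} \<inter> A) s \<partial>lborel)"
      by (intro nn_integral_cmult) measurable
    finally show ?thesis .
  qed
  have scale: "ennreal (1 / surv (f i) b) * ennreal v = ennreal (v / surv (f i) b)" for v
    using b by (simp add: ennreal_mult''[symmetric] divide_inverse mult.commute)
  have "{b<..} \<inter> {t<..} = {max b t<..}" "{b<..} \<inter> {t<..u} = {max b t<..u}" by auto
  then show "kernel_mass (yule_kernel f fb) i b {t<..} = ennreal (surv (f i) (max b t) / surv (f i) b)"
    and "kernel_mass (yule_kernel f fb) i b {t<..u}
      = ennreal ((surv (f i) (max b t) - surv (f i) u) / surv (f i) b)"
    by (simp_all add: restrict scale nn_integral_version_greaterThan[OF density[OF i] version_AE[OF i]]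
        nn_integral_version_greaterThanAtMost[OF density[OF i] version_AE[OF i]])
qed

lemma kernel_mass_repl:
  assumes i: "1 \<le> i"
  shows "kernel_mass (repl_kernel fb) i b {t<..} = ennreal (surv (f i) (t - b))"
    and "kernel_mass (repl_kernel fb) i b {t<..u} = ennreal (surv (f i) (t - b) - surv (f i) (u - b))"
proof -
  have shift: "kernel_mass (repl_kernel fb) i b A = (\<integral>\<^sup>+ v. ennreal (fb i v) * indicator ((\<lambda>v. v + b) -` A) v \<partial>lborel)"
    if "A \<in> sets borel" for A
    unfolding kernel_mass_def repl_kernel_def
    using i that version_borel[of i] nn_integral_real_affine[of "\<lambda>s. ennreal (fb i (s - b)) * indicator A s" 1 b]
    by (simp add: indicator_def add.commute)
  have "(\<lambda>v. v + b) -` {t<..} = {t - b<..}" "(\<lambda>v. v + b) -` {t<..u} = {t - b<..u - b}" by auto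
  then show "kernel_mass (repl_kernel fb) i b {t<..} = ennreal (surv (f i) (t - b))"
    and "kernel_mass (repl_kernel fb) i b {t<..u} = ennreal (surv (f i) (t - b) - surv (f i) (u - b))"
    by (simp_all add: shift nn_integral_version_greaterThan[OF density[OF i] version_AE[OF i]]
        nn_integral_version_greaterThanAtMost[OF density[OF i] version_AE[OF i]])
qed

lemma kernel_mass_yule_window:
  assumes i: "1 \<le> i" and t: "0 \<le> t" "t < b"
  shows "kernel_mass (yule_kernel f fb) i b {t<..u}
    \<le> ennreal (1 - surv (f i) u / surv (f i) t) * indicator {..u} b"
proof (cases "b \<le> u")
  case True
  have St: "0 < surv (f i) t" and Sb: "0 < surv (f i) b" using surv_pos i t by auto
  have "surv (f i) u / surv (f i) t \<le> surv (f i) u / surv (f i) b"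
    using surv_antimono[OF density[OF i], of t b] t Sb surv_nonneg[OF density[OF i]]
    by (intro divide_left_mono) auto
  then have "(surv (f i) b - surv (f i) u) / surv (f i) b \<le> 1 - surv (f i) u / surv (f i) t"
    using Sb by (simp add: diff_divide_distrib)
  then show ?thesis
    using True t Sb by (simp add: kernel_mass_yule(2)[OF i] max_absorb1 ennreal_leI)
next
  case False
  then have "surv (f i) b - surv (f i) u \<le> 0"
    using surv_antimono[OF density[OF i], of u b] by simp
  then have "(surv (f i) b - surv (f i) u) / surv (f i) b \<le> 0"
    using t surv_pos[OF i, of b] by (intro divide_nonpos_pos) auto
  then show ?thesis
    using False t surv_pos[OF i, of b] by (simp add: kernel_mass_yule(2)[OF i] max_absorb1 ennreal_neg)
qed

lemma kernel_mass_repl_window: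
  assumes i: "1 \<le> i" and t: "t < b"
  shows "kernel_mass (repl_kernel fb) i b {t<..t + D} \<le> ennreal (1 - surv (f i) D) * indicator {..t + D} b"
proof -
  have S1: "surv (f i) (t - b) = 1" using surv_eq_1[OF density[OF i]] t by simp
  show ?thesis
  proof (cases "b \<le> t + D")
    case True
    then have "surv (f i) D \<le> surv (f i) (t + D - b)"
      using surv_antimono[OF density[OF i]] t by simp
    then show ?thesis using True by (simp add: kernel_mass_repl(2)[OF i] S1 ennreal_leI)
  next
    case False
    then show ?thesis using surv_eq_1[OF density[OF i], of "t + D - b"]
      by (simp add: kernel_mass_repl(2)[OF i] S1)
  qed
qed

lemma markov_density_yule: "markov_density (yule_dens f n) n (yule_kernel f f) (yule_kernel f fb)"
proof
  show "yule_dens f n z = (\<Prod>i=1..n. yule_kernel f f i (prevt z i) (z i))" for z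
    by (rule yule_dens_eq_prod)
  show "0 \<le> yule_kernel f f i b s" for i b s
    using density[of i] surv_nonneg[OF density[of i]]
    by (auto simp: yule_kernel_def nonneg_ac_density_def)
  show "s < b \<Longrightarrow> yule_kernel f f i b s = 0" for i b s
    by (simp add: yule_kernel_def)
  show "(\<lambda>p. yule_kernel f fb i (fst p) (snd p)) \<in> borel_measurable borel" for i
  proof (cases "1 \<le> i")
    case True
    have [measurable]: "fb i \<in> borel_measurable borel" "surv (f i) \<in> borel_measurable borel"
      using version_borel borel_measurable_surv[OF density[OF True]] by auto
    show ?thesis unfolding yule_kernel_def by measurable
  qed (simp add: yule_kernel_def)
  show "\<exists>N\<in>null_sets lborel. \<exists>\<kappa>. \<forall>b s. yule_kernel f f i b s \<noteq> yule_kernel f fb i b s \<longrightarrow> s - \<kappa> * b \<in> N"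
    if "i \<in> {1..n}" for i
  proof -
    from that have "1 \<le> i" by simp
    then obtain N where "N \<in> null_sets lborel" "\<And>s. f i s \<noteq> fb i s \<Longrightarrow> s \<in> N"
      by (elim version_AE_null_set) blast
    then show ?thesis by (intro bexI[of _ N] exI[of _ 0]) (auto simp: yule_kernel_def)
  qed
  show "kernel_mass (yule_kernel f fb) i b {t<..} = 1" if "i \<in> {1..n}" "0 \<le> t" "t < b" for i t b
    using that surv_pos[of i b] by (simp add: kernel_mass_yule(1))
  show "\<exists>\<epsilon>. (\<epsilon> \<longlongrightarrow> 0) (at_right 0) \<and> (\<forall>D>0. 0 \<le> \<epsilon> D \<and> \<epsilon> D \<le> 1) \<and>
      (\<forall>D>0. \<forall>b>t. kernel_mass (yule_kernel f fb) i b {t<..t + D} \<le> ennreal (\<epsilon> D) * indicator {..t + D} b)"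
    if i: "i \<in> {1..n}" and t: "0 \<le> t" for i t
  proof (intro exI conjI allI impI)
    have St: "0 < surv (f i) t" using surv_pos i t by auto
    have "((\<lambda>D. 1 - surv (f i) (t + D) / surv (f i) t) \<longlongrightarrow> 1 - surv (f i) t / surv (f i) t) (at_right 0)"
      using surv_right_continuous i t St by (intro tendsto_intros) auto
    then show "((\<lambda>D. 1 - surv (f i) (t + D) / surv (f i) t) \<longlongrightarrow> 0) (at_right 0)" using St by simp
    fix D :: real assume "0 < D"
    then show "0 \<le> 1 - surv (f i) (t + D) / surv (f i) t" "1 - surv (f i) (t + D) / surv (f i) t \<le> 1"
      using St surv_antimono[OF density, of i t "t + D"] surv_nonneg[OF density, of i "t + D"] i
      by auto
    show "kernel_mass (yule_kernel f fb) i b {t<..t + D}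
        \<le> ennreal (1 - surv (f i) (t + D) / surv (f i) t) * indicator {..t + D} b" if "t < b" for b
      using i t that by (intro kernel_mass_yule_window) auto
  qed
qed

lemma markov_density_repl: "markov_density (repl_dens f n) n (repl_kernel f) (repl_kernel fb)"
proof
  show "repl_dens f n z = (\<Prod>i=1..n. repl_kernel f i (prevt z i) (z i))" for z
    by (rule repl_dens_eq_prod)
  show "0 \<le> repl_kernel f i b s" for i b s
    using density[of i] by (auto simp: repl_kernel_def nonneg_ac_density_def)
  show "s < b \<Longrightarrow> repl_kernel f i b s = 0" for i b s
    using density[of i] by (auto simp: repl_kernel_def nonneg_ac_density_def)
  show "(\<lambda>p. repl_kernel fb i (fst p) (snd p)) \<in> borel_measurable borel" for i
  proof -
    have [measurable]: "fb i \<in> borel_measurable borel" by (rule version_borel)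
    show ?thesis unfolding repl_kernel_def by measurable
  qed
  show "\<exists>N\<in>null_sets lborel. \<exists>\<kappa>. \<forall>b s. repl_kernel f i b s \<noteq> repl_kernel fb i b s \<longrightarrow> s - \<kappa> * b \<in> N"
    if "i \<in> {1..n}" for i
  proof -
    from that have "1 \<le> i" by simp
    then obtain N where "N \<in> null_sets lborel" "\<And>s. f i s \<noteq> fb i s \<Longrightarrow> s \<in> N"
      by (elim version_AE_null_set) blast
    then show ?thesis by (intro bexI[of _ N] exI[of _ 1]) (auto simp: repl_kernel_def)
  qed
  show "kernel_mass (repl_kernel fb) i b {t<..} = 1" if "i \<in> {1..n}" "t < b" for i t b
    using that surv_eq_1[OF density, of i "t - b"] by (simp add: kernel_mass_repl(1))
  show "\<exists>\<epsilon>. (\<epsilon> \<longlongrightarrow> 0) (at_right 0) \<and> (\<forall>D>0. 0 \<le> \<epsilon> D \<and> \<epsilon> D \<le> 1) \<and>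
      (\<forall>D>0. \<forall>b>t. kernel_mass (repl_kernel fb) i b {t<..t + D} \<le> ennreal (\<epsilon> D) * indicator {..t + D} b)"
    if i: "i \<in> {1..n}" for i t
  proof (intro exI conjI allI impI)
    have "((\<lambda>D. 1 - surv (f i) (0 + D)) \<longlongrightarrow> 1 - surv (f i) 0) (at_right 0)"
      using surv_right_continuous[of i 0] i by (intro tendsto_intros) auto
    then show "((\<lambda>D. 1 - surv (f i) D) \<longlongrightarrow> 0) (at_right 0)"
      using surv_eq_1[OF density, of i 0] i by simp
    fix D :: real assume "0 < D"
    then show "0 \<le> 1 - surv (f i) D" "1 - surv (f i) D \<le> 1"
      using surv_le_1[OF density] surv_nonneg[OF density] i by auto
    show "kernel_mass (repl_kernel fb) i b {t<..t + D} \<le> ennreal (1 - surv (f i) D) * indicator {..t + D} b"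
      if "t < b" for b
      using i that by (intro kernel_mass_repl_window) auto
  qed
qed

lemma cond_hazard_yule:
  assumes pos: "possible_hist (yule_dens f n) n {1..m} x t" and m: "m < n"
    and a: "0 \<le> prevt x (Suc m)" "prevt x (Suc m) \<le> t" and k: "k \<in> {Suc m..n}"
  shows "cond_hazard (yule_dens f n) n {1..m} x t k = (if k = Suc m then h (Suc m) t else 0)"
proof -
  interpret markov_density "yule_dens f n" n "yule_kernel f f" "yule_kernel f fb"
    by (rule markov_density_yule)
  let ?S = "surv (f (Suc m))"
  have t: "0 \<le> t" using a by simp
  have Sa: "0 < ?S (prevt x (Suc m))" and St: "0 < ?S t" using surv_pos a t by auto
  have quotient: "hazard_quotient (yule_dens f n) n {1..m} x t (Suc m) D = (?S t - ?S (t + D)) / (D * ?S t)"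
    if D: "0 < D" for D
  proof -
    have "0 \<le> (?S t - ?S (t + D)) / ?S (prevt x (Suc m))" "0 \<le> ?S t / ?S (prevt x (Suc m))"
      using surv_antimono[OF density, of "Suc m" t "t + D"] D Sa St by auto
    then have "hazard_quotient (yule_dens f n) n {1..m} x t (Suc m) D
        = (?S t - ?S (t + D)) / ?S (prevt x (Suc m)) / (D * (?S t / ?S (prevt x (Suc m))))"
      using hazard_quotient_next[OF pos m t D] a Sa by (simp add: kernel_mass_yule max_absorb2)
    also have "\<dots> = (?S t - ?S (t + D)) / (D * ?S t)"
      using Sa by simp
    finally show ?thesis .
  qed
  have "((\<lambda>D. (?S t - ?S (t + D)) / (D * ?S t)) \<longlongrightarrow> h (Suc m) t) (at_right 0)"
    using hazard[of "Suc m"] t unfolding is_hazard_rate_def by simp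
  moreover have "\<forall>\<^sub>F D in at_right 0. (?S t - ?S (t + D)) / (D * ?S t) = hazard_quotient (yule_dens f n) n {1..m} x t (Suc m) D"
    using eventually_at_right_less[of "0::real"] by eventually_elim (metis quotient)
  ultimately have "(hazard_quotient (yule_dens f n) n {1..m} x t (Suc m) \<longlongrightarrow> h (Suc m) t) (at_right 0)"
    by (rule Lim_transform_eventually)
  then show ?thesis by (rule cond_hazard_initial_segment[OF pos m t _ k])
qed

lemma cond_hazard_repl:
  assumes pos: "possible_hist (repl_dens f n) n {1..m} x t" and m: "m < n"
    and a: "0 \<le> prevt x (Suc m)" "prevt x (Suc m) \<le> t" and k: "k \<in> {Suc m..n}"
  shows "cond_hazard (repl_dens f n) n {1..m} x t k
    = (if k = Suc m then h (Suc m) (t - prevt x (Suc m)) else 0)"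
proof -
  interpret markov_density "repl_dens f n" n "repl_kernel f" "repl_kernel fb"
    by (rule markov_density_repl)
  let ?S = "surv (f (Suc m))" and ?u = "t - prevt x (Suc m)"
  have t: "0 \<le> t" and u: "0 \<le> ?u" using a by auto
  have Su: "0 < ?S ?u" using surv_pos u by auto
  have quotient: "hazard_quotient (repl_dens f n) n {1..m} x t (Suc m) D = (?S ?u - ?S (?u + D)) / (D * ?S ?u)"
    if D: "0 < D" for D
  proof -
    have "0 \<le> ?S ?u - ?S (?u + D)"
      using surv_antimono[OF density, of "Suc m" ?u "?u + D"] D by auto
    then show ?thesis
      using hazard_quotient_next[OF pos m t D] Su by (simp add: kernel_mass_repl algebra_simps)
  qed
  have "((\<lambda>D. (?S ?u - ?S (?u + D)) / (D * ?S ?u)) \<longlongrightarrow> h (Suc m) ?u) (at_right 0)"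
    using hazard[of "Suc m"] u unfolding is_hazard_rate_def by simp
  moreover have "\<forall>\<^sub>F D in at_right 0. (?S ?u - ?S (?u + D)) / (D * ?S ?u) = hazard_quotient (repl_dens f n) n {1..m} x t (Suc m) D"
    using eventually_at_right_less[of "0::real"] by eventually_elim (metis quotient)
  ultimately have "(hazard_quotient (repl_dens f n) n {1..m} x t (Suc m) \<longlongrightarrow> h (Suc m) ?u) (at_right 0)"
    by (rule Lim_transform_eventually)
  then show ?thesis by (rule cond_hazard_initial_segment[OF pos m t _ k])
qed

end


section \<open>Comparison of the conditional hazards\<close>

lemma prevt_Suc_bounds:
  assumes "\<And>i. i \<in> {1..m} \<Longrightarrow> 0 \<le> x i \<and> x i \<le> t" "0 \<le> t"
  shows "0 \<le> prevt x (Suc m) \<and> prevt x (Suc m) \<le> t"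
  using assms(1)[of m] assms(2) by (cases m) (auto simp: prevt_def)

lemma dyn_hr_le_markov:
  assumes X: "markov_density gX n QX QX'" and Y: "markov_density gY n QY QY'"
    and hazard_X: "\<And>m x t k. possible_hist gX n {1..m} x t \<Longrightarrow> m < n \<Longrightarrow>
      0 \<le> prevt x (Suc m) \<Longrightarrow> prevt x (Suc m) \<le> t \<Longrightarrow> k \<in> {Suc m..n} \<Longrightarrow>
      cond_hazard gX n {1..m} x t k = (if k = Suc m then hX m (prevt x (Suc m)) t else 0)"
    and hazard_Y: "\<And>m y t k. possible_hist gY n {1..m} y t \<Longrightarrow> m < n \<Longrightarrow>
      0 \<le> prevt y (Suc m) \<Longrightarrow> prevt y (Suc m) \<le> t \<Longrightarrow> k \<in> {Suc m..n} \<Longrightarrow>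
      cond_hazard gY n {1..m} y t k = (if k = Suc m then hY m (prevt y (Suc m)) t else 0)"
    and hX_nonneg: "\<And>m a t. 0 \<le> a \<Longrightarrow> a \<le> t \<Longrightarrow> 0 \<le> hX m a t"
    and hY_le_hX: "\<And>m a b t. 0 \<le> a \<Longrightarrow> a \<le> t \<Longrightarrow> 0 \<le> b \<Longrightarrow> b \<le> t \<Longrightarrow> hY m b t \<le> hX m a t"
  shows "dyn_hr_le n gX gY"
  unfolding dyn_hr_le_def
proof (intro allI impI ballI)
  fix t I J x y k
  assume t: "0 \<le> t" and IJ: "I \<subseteq> {1..n}" "J \<subseteq> {1..n}" "I \<inter> J = {}"
    and xy_I: "\<forall>i\<in>I. 0 \<le> x i \<and> x i \<le> y i \<and> y i \<le> t" and x_J: "\<forall>j\<in>J. 0 \<le> x j \<and> x j \<le> t"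
    and pos_X: "possible_hist gX n (I \<union> J) x t" and pos_Y: "possible_hist gY n I y t"
    and k: "k \<in> {1..n} - (I \<union> J)"
  obtain mx where mx: "I \<union> J = {1..mx}"
    using markov_density.possible_hist_initial_segment[OF X _ _ pos_X] IJ xy_I x_J by force
  obtain my where my: "I = {1..my}"
    using markov_density.possible_hist_initial_segment[OF Y _ _ pos_Y] IJ xy_I by force
  have "my \<le> mx" using mx my by (cases my) auto
  have k_X: "k \<in> {Suc mx..n}" and k_Y: "k \<in> {Suc my..n}" using k mx \<open>my \<le> mx\<close> by auto
  have "0 \<le> x i \<and> x i \<le> t" if "i \<in> {1..mx}" for i
    using that xy_I x_J unfolding mx[symmetric] by force
  then have a: "0 \<le> prevt x (Suc mx) \<and> prevt x (Suc mx) \<le> t"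
    using t by (rule prevt_Suc_bounds)
  have "0 \<le> y i \<and> y i \<le> t" if "i \<in> {1..my}" for i
    using that xy_I unfolding my[symmetric] by force
  then have b: "0 \<le> prevt y (Suc my) \<and> prevt y (Suc my) \<le> t"
    using t by (rule prevt_Suc_bounds)
  have "cond_hazard gX n (I \<union> J) x t k = (if k = Suc mx then hX mx (prevt x (Suc mx)) t else 0)"
    using hazard_X[of mx x t k] pos_X mx a k_X by auto
  moreover have "cond_hazard gY n I y t k = (if k = Suc my then hY my (prevt y (Suc my)) t else 0)"
    using hazard_Y[of my y t k] pos_Y my b k_Y by auto
  moreover have "k = Suc my \<Longrightarrow> mx = my" using k_X \<open>my \<le> mx\<close> by auto
  ultimately show "cond_hazard gY n I y t k \<le> cond_hazard gX n (I \<union> J) x t k"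
    using a b hX_nonneg hY_le_hX by auto
qed

theorem mainTheorem8:
  fixes r :: "real \<Rightarrow> real" and f :: "nat \<Rightarrow> real \<Rightarrow> real"
  assumes r_pos: "\<And>t. t \<ge> 0 \<Longrightarrow> r t > 0"
    and dens: "\<And>n. n \<ge> 1 \<Longrightarrow> nonneg_ac_density (f n)"
    and surv_pos: "\<And>n t. n \<ge> 1 \<Longrightarrow> t \<ge> 0 \<Longrightarrow> surv (f n) t > 0"
    and hazard: "\<And>n. n \<ge> 1 \<Longrightarrow> is_hazard_rate (f n) (\<lambda>t. real (n + 1) * r t)"
  shows "(mono_on {0..} r \<longrightarrow> (\<forall>n\<ge>1. dyn_hr_le n (yule_dens f n) (repl_dens f n)))
       \<and> (antimono_on {0..} r \<longrightarrow> (\<forall>n\<ge>1. dyn_hr_le n (repl_dens f n) (yule_dens f n)))"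
proof -
  obtain fb where "\<And>i. fb i \<in> borel_measurable borel" "\<And>i. 1 \<le> i \<Longrightarrow> AE x in lborel. f i x = fb i x"
    by (rule nonneg_ac_density_family_borel_version[where f = f]) (auto intro: dens)
  then interpret hazard_family f "\<lambda>i t. real (i + 1) * r t" fb
    using dens surv_pos hazard by unfold_locales auto
  let ?hY = "\<lambda>m a t. real (Suc m + 1) * r t" and ?hR = "\<lambda>m a t. real (Suc m + 1) * r (t - a)"
  show ?thesis
  proof (intro conjI impI allI)
    fix n :: nat assume mono: "mono_on {0..} r"
    show "dyn_hr_le n (yule_dens f n) (repl_dens f n)"
      by (rule dyn_hr_le_markov[where hX = ?hY and hY = ?hR,
            OF markov_density_yule markov_density_repl cond_hazard_yule cond_hazard_repl])
        (auto intro!: mult_left_mono mult_nonneg_nonneg mono_onD[OF mono] less_imp_le[OF r_pos])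
  next
    fix n :: nat assume anti: "antimono_on {0..} r"
    show "dyn_hr_le n (repl_dens f n) (yule_dens f n)"
      by (rule dyn_hr_le_markov[where hX = ?hR and hY = ?hY,
            OF markov_density_repl markov_density_yule cond_hazard_repl cond_hazard_yule])
        (auto intro!: mult_left_mono mult_nonneg_nonneg monotone_onD[OF anti] less_imp_le[OF r_pos])
  qed
qed

end
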